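(* Let $n,m$ be positive integers and $t$ a nonnegative integer. Let $P$ be an induced path of a graph $G$ and let $x\in V(G)\setminus V(P)$ be such that $G\setminus V(P)\setminus x$ has $t$ components and $x$ has at least $(m+2)n^t$ neighbors in $P$. Then either $G$ has a $K_{2,n}$-minor, or $P$ has a subpath $P^*$ such that $x$ has exactly $m$ neighbors in $P^*$ and no vertex of $G\setminus V(P)$ other than $x$ has a neighbor in $P^*$.
   Context: Graphs are finite and simple; minors are simple minors. *)

theory Defs
  imports Main
begin

definition simple_graph :: "'a set \<Rightarrow> ('a \<Rightarrow> 'a \<Rightarrow> bool) \<Rightarrow> bool" where
  "simple_graph V E \<longleftrightarrow> finite V \<and> (\<forall>u v. E u v \<longrightarrow> u \<in> V \<and> v \<in> V)
     \<and> (\<forall>u v. E u v \<longrightarrow> E v u) \<and> (\<forall>u. \<not> E u u)"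

definition connected_in :: "('a \<Rightarrow> 'a \<Rightarrow> bool) \<Rightarrow> 'a set \<Rightarrow> bool" where
  "connected_in E S \<longleftrightarrow> S \<noteq> {} \<and>
     (\<forall>u\<in>S. \<forall>v\<in>S. (\<lambda>a b. E a b \<and> a \<in> S \<and> b \<in> S)\<^sup>*\<^sup>* u v)"

definition components :: "('a \<Rightarrow> 'a \<Rightarrow> bool) \<Rightarrow> 'a set \<Rightarrow> 'a set set" where
  "components E W = {C. C \<subseteq> W \<and> connected_in E C \<and>
     (\<forall>D. C \<subseteq> D \<and> D \<subseteq> W \<and> connected_in E D \<longrightarrow> D = C)}"

definition induced_path :: "'a set \<Rightarrow> ('a \<Rightarrow> 'a \<Rightarrow> bool) \<Rightarrow> 'a list \<Rightarrow> bool" where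
  "induced_path V E P \<longleftrightarrow> P \<noteq> [] \<and> distinct P \<and> set P \<subseteq> V \<and>
     (\<forall>i j. i < length P \<and> j < length P \<longrightarrow>
        (E (P ! i) (P ! j) \<longleftrightarrow> (i = j + 1 \<or> j = i + 1)))"

definition subpath :: "'a list \<Rightarrow> 'a list \<Rightarrow> bool" where
  "subpath Q P \<longleftrightarrow> Q \<noteq> [] \<and> (\<exists>ys zs. P = ys @ Q @ zs)"

definition minor_model :: "'a set \<Rightarrow> ('a \<Rightarrow> 'a \<Rightarrow> bool) \<Rightarrow> 'b set \<Rightarrow> ('b \<Rightarrow> 'b \<Rightarrow> bool)
     \<Rightarrow> ('b \<Rightarrow> 'a set) \<Rightarrow> bool" where
  "minor_model V E VH EH \<beta> \<longleftrightarrow>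
     (\<forall>h\<in>VH. \<beta> h \<subseteq> V \<and> connected_in E (\<beta> h)) \<and>
     (\<forall>h\<in>VH. \<forall>h'\<in>VH. h \<noteq> h' \<longrightarrow> \<beta> h \<inter> \<beta> h' = {}) \<and>
     (\<forall>h\<in>VH. \<forall>h'\<in>VH. EH h h' \<longrightarrow> (\<exists>u\<in>\<beta> h. \<exists>v\<in>\<beta> h'. E u v))"

definition has_minor :: "'a set \<Rightarrow> ('a \<Rightarrow> 'a \<Rightarrow> bool) \<Rightarrow> 'b set \<Rightarrow> ('b \<Rightarrow> 'b \<Rightarrow> bool) \<Rightarrow> bool" where
  "has_minor V E VH EH \<longleftrightarrow> (\<exists>\<beta>. minor_model V E VH EH \<beta>)"

definition K2n_V :: "nat \<Rightarrow> (nat + nat) set" where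
  "K2n_V n = {Inl 0, Inl 1} \<union> Inr ` {..<n}"

definition K2n_E :: "nat + nat \<Rightarrow> nat + nat \<Rightarrow> bool" where
  "K2n_E a b \<longleftrightarrow> isl a \<noteq> isl b"

end

theory Submission
  imports Defs
begin

text \<open>
  Treat the components of \<open>G - V(P) - x\<close> one at a time. A segment of \<open>P\<close> containing at least
  \<open>m n\<^sup>k\<close> neighbours of \<open>x\<close> is cut into \<open>n\<close> consecutive subpaths containing at least
  \<open>m n\<^sup>k\<^sup>-\<^sup>1\<close> each. If the next component \<open>C\<close> has a neighbour in all of them, then \<open>{x}\<close>,
  \<open>C\<close> and the \<open>n\<close> subpaths are the branch sets of a \<open>K\<^sub>2\<^sub>,\<^sub>n\<close>-minor; otherwise we continue
  inside a subpath that \<open>C\<close> does not touch. Once all components are used up, an initial piece of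
  the current segment with exactly \<open>m\<close> neighbours of \<open>x\<close> is the required subpath.
\<close>

lemma split_filter_length:
  "q \<le> length (filter p xs) \<Longrightarrow> \<exists>ys zs. xs = ys @ zs \<and> length (filter p ys) = q"
proof (induction xs arbitrary: q)
  case Nil
  then show ?case by simp
next
  case (Cons a xs)
  show ?case
  proof (cases "q = 0")
    case True
    then show ?thesis by (intro exI[of _ "[]"] exI[of _ "a # xs"]) simp
  next
    case False
    then have "(if p a then q - 1 else q) \<le> length (filter p xs)"
      using Cons.prems by auto
    then obtain ys zs where "xs = ys @ zs" "length (filter p ys) = (if p a then q - 1 else q)"
      using Cons.IH by blast
    then show ?thesis
      using False by (intro exI[of _ "a # ys"] exI[of _ zs]) auto
  qed
qed

lemma split_concat_filter_length:
  assumes "0 < k" "k * q \<le> length (filter p xs)"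
  shows "\<exists>xss. length xss = k \<and> concat xss = xs \<and> (\<forall>ys\<in>set xss. q \<le> length (filter p ys))"
  using assms
proof (induction k arbitrary: xs rule: nat_induct_non_zero)
  case 1
  then show ?case by (intro exI[of _ "[xs]"]) simp
next
  case (Suc k)
  then obtain ys zs where split: "xs = ys @ zs" "length (filter p ys) = q"
    using split_filter_length[of q p xs] by auto
  with Suc.prems have "k * q \<le> length (filter p zs)" by simp
  then obtain zss where "length zss = k" "concat zss = zs" "\<forall>ys\<in>set zss. q \<le> length (filter p ys)"
    using Suc.IH by blast
  with split show ?case by (intro exI[of _ "ys # zss"]) auto
qed

lemma nth_disjoint_if_distinct_concat:
  assumes "distinct (concat xss)" "[] \<notin> set xss" "i < length xss" "j < length xss" "i \<noteq> j"
  shows "set (xss ! i) \<inter> set (xss ! j) = {}"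
proof -
  have "distinct xss" using assms(1,2) by (simp add: distinct_concat_iff)
  then have "xss ! i \<noteq> xss ! j" using assms(3-5) by (simp add: nth_eq_iff_index_eq)
  then show ?thesis using assms(1,3,4) by (simp add: distinct_concat_iff)
qed

lemma subpath_refl: "P \<noteq> [] \<Longrightarrow> subpath P P"
  unfolding subpath_def by (metis append_Nil append_Nil2)

lemma subpath_trans: "subpath Q R \<Longrightarrow> subpath R P \<Longrightarrow> subpath Q P"
  unfolding subpath_def by (metis append.assoc)

lemma subpath_nth_concat:
  assumes "i < length xss" "xss ! i \<noteq> []"
  shows "subpath (xss ! i) (concat xss)"
proof -
  have "concat xss = concat (take i xss) @ xss ! i @ concat (drop (Suc i) xss)"
    using id_take_nth_drop[OF assms(1)] by (metis concat.simps(2) concat_append)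
  then show ?thesis using assms(2) unfolding subpath_def by blast
qed

lemma subpaths_of_filter_length:
  assumes "distinct S" "0 < k" "0 < q" "k * q \<le> length (filter p S)"
  obtains Ts where "length Ts = k" "\<And>T. T \<in> set Ts \<Longrightarrow> subpath T S \<and> q \<le> length (filter p T)"
    "\<And>i j. i < k \<Longrightarrow> j < k \<Longrightarrow> i \<noteq> j \<Longrightarrow> set (Ts ! i) \<inter> set (Ts ! j) = {}"
proof -
  obtain Ts where Ts: "length Ts = k" "concat Ts = S" "\<forall>T\<in>set Ts. q \<le> length (filter p T)"
    using split_concat_filter_length[OF assms(2,4)] by blast
  have nonempty: "[] \<notin> set Ts" using Ts(3) assms(3) by fastforce
  show thesis
  proof
    show "subpath T S \<and> q \<le> length (filter p T)" if "T \<in> set Ts" for T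
      using that Ts nonempty subpath_nth_concat by (metis in_set_conv_nth)
    show "set (Ts ! i) \<inter> set (Ts ! j) = {}" if "i < k" "j < k" "i \<noteq> j" for i j
      using nth_disjoint_if_distinct_concat[of Ts i j] that Ts assms(1) nonempty by simp
  qed (rule Ts(1))
qed

lemma induced_walk_mono:
  assumes "(\<lambda>a b. E a b \<and> a \<in> A \<and> b \<in> A)\<^sup>*\<^sup>* u v" "A \<subseteq> B"
  shows "(\<lambda>a b. E a b \<and> a \<in> B \<and> b \<in> B)\<^sup>*\<^sup>* u v"
  using assms(1) by (rule rtranclp_mono[THEN predicate2D, rotated]) (use assms(2) in auto)

lemma connected_in_singleton: "connected_in E {a}"
  by (simp add: connected_in_def)

lemma connected_in_insert:
  assumes conn: "connected_in E B" and "b \<in> B" "E a b" "E b a"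
  shows "connected_in E (insert a B)"
proof -
  let ?R = "\<lambda>u v. E u v \<and> u \<in> insert a B \<and> v \<in> insert a B"
  have in_B: "?R\<^sup>*\<^sup>* u v" if "u \<in> B" "v \<in> B" for u v
    using conn that unfolding connected_in_def by (blast intro: induced_walk_mono)
  have "?R a b" "?R b a" using assms(2-4) by auto
  then have "?R\<^sup>*\<^sup>* u v" if "u \<in> insert a B" "v \<in> insert a B" for u v
    using that in_B[of u b] in_B[of b v] \<open>b \<in> B\<close>
    by (auto intro: converse_rtranclp_into_rtranclp rtranclp.rtrancl_into_rtrancl)
  then show ?thesis by (simp add: connected_in_def)
qed

lemma induced_path_subpath:
  assumes path: "induced_path V E P" and "subpath Q P"
  shows "induced_path V E Q"
proof -
  obtain ys zs where P: "P = ys @ Q @ zs" and "Q \<noteq> []"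
    using assms(2) by (auto simp: subpath_def)
  have nth_Q: "P ! (length ys + i) = Q ! i" if "i < length Q" for i
    using that by (simp add: P nth_append)
  have "E (Q ! i) (Q ! j) \<longleftrightarrow> i = j + 1 \<or> j = i + 1"
    if "i < length Q" "j < length Q" for i j
  proof -
    have "length ys + i < length P" "length ys + j < length P" using that by (simp_all add: P)
    then have "E (P ! (length ys + i)) (P ! (length ys + j)) \<longleftrightarrow>
        length ys + i = length ys + j + 1 \<or> length ys + j = length ys + i + 1"
      using path unfolding induced_path_def by blast
    then show ?thesis using that by (simp add: nth_Q)
  qed
  with path \<open>Q \<noteq> []\<close> show ?thesis by (auto simp: induced_path_def P)
qed

lemma induced_path_adjacent:
  assumes "induced_path V E P" "Suc i < length P"
  shows "E (P ! i) (P ! Suc i) \<and> E (P ! Suc i) (P ! i)"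
  using assms unfolding induced_path_def by (metis Suc_eq_plus1 Suc_lessD)

lemma connected_in_induced_path: "induced_path V E P \<Longrightarrow> connected_in E (set P)"
proof (induction P)
  case Nil
  then show ?case by (simp add: induced_path_def)
next
  case (Cons a P)
  show ?case
  proof (cases P)
    case Nil
    then show ?thesis by (simp add: connected_in_singleton)
  next
    case P: (Cons b P')
    have "subpath P (a # P)"
      using P unfolding subpath_def by (metis append_Cons append_Nil append_Nil2 list.distinct(1))
    then have "induced_path V E P" by (rule induced_path_subpath[OF Cons.prems])
    moreover have "E a b \<and> E b a"
      using induced_path_adjacent[OF Cons.prems, of 0] P by simp
    ultimately show ?thesis using Cons.IH P by (auto intro: connected_in_insert)
  qed
qed

lemma finite_components: "finite W \<Longrightarrow> finite (components E W)"
  by (rule finite_subset[of _ "Pow W"]) (auto simp: components_def)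

lemma in_components:
  assumes "symp E" "u \<in> W"
  shows "\<exists>C\<in>components E W. u \<in> C"
proof -
  let ?walk = "\<lambda>S. (\<lambda>a b. E a b \<and> a \<in> S \<and> b \<in> S)\<^sup>*\<^sup>*"
  define R where "R = {v. ?walk W u v}"
  have walk_R: "?walk R u v" if "?walk W u v" for v
    using that
  proof (induction rule: rtranclp_induct)
    case (step b c)
    then have "b \<in> R" "c \<in> R" unfolding R_def by (auto intro: rtranclp.rtrancl_into_rtrancl)
    with step show ?case by (auto intro: rtranclp.rtrancl_into_rtrancl)
  qed simp
  have "R \<subseteq> W"
  proof
    fix v assume "v \<in> R"
    then have "?walk W u v" by (simp add: R_def)
    then show "v \<in> W" using \<open>u \<in> W\<close> by (induction rule: rtranclp_induct) auto
  qed
  moreover have "connected_in E R"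
  proof -
    have sym: "symp (?walk R)" using \<open>symp E\<close> by (intro symp_rtranclp) (auto simp: symp_def)
    have "?walk R v w" if "v \<in> R" "w \<in> R" for v w
    proof -
      have "?walk R u v" "?walk R u w" using that walk_R by (simp_all add: R_def)
      then show ?thesis using sym by (meson rtranclp_trans sympD)
    qed
    moreover have "u \<in> R" by (simp add: R_def)
    ultimately show ?thesis unfolding connected_in_def by blast
  qed
  moreover have "D = R" if "R \<subseteq> D" "D \<subseteq> W" "connected_in E D" for D
  proof
    have "u \<in> D" using that(1) by (auto simp: R_def)
    then show "D \<subseteq> R"
      using that(2,3) unfolding connected_in_def R_def by (blast intro: induced_walk_mono)
  qed (rule that(1))
  ultimately have "R \<in> components E W" by (simp add: components_def)
  then show ?thesis by (intro bexI[of _ R]) (simp_all add: R_def)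
qed

lemma Union_components:
  assumes "symp E"
  shows "\<Union>(components E W) = W"
proof
  show "\<Union>(components E W) \<subseteq> W" by (auto simp: components_def)
  show "W \<subseteq> \<Union>(components E W)" using in_components[OF assms] by blast
qed

lemma has_K2n_minorI:
  assumes sym: "symp E" and x: "x \<in> V" and C: "C \<subseteq> V" "connected_in E C" "x \<notin> C"
    and B: "\<And>i. i < n \<Longrightarrow> B i \<subseteq> V" "\<And>i. i < n \<Longrightarrow> connected_in E (B i)"
      "\<And>i. i < n \<Longrightarrow> x \<notin> B i" "\<And>i. i < n \<Longrightarrow> C \<inter> B i = {}"
      "\<And>i j. i < n \<Longrightarrow> j < n \<Longrightarrow> i \<noteq> j \<Longrightarrow> B i \<inter> B j = {}"
    and x_B: "\<And>i. i < n \<Longrightarrow> \<exists>v\<in>B i. E x v"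
    and C_B: "\<And>i. i < n \<Longrightarrow> \<exists>u\<in>C. \<exists>v\<in>B i. E u v"
  shows "has_minor V E (K2n_V n) K2n_E"
proof -
  define \<beta> where "\<beta> = case_sum (\<lambda>a :: nat. if a = 0 then {x} else C) B"
  have K2n_cases: "h = Inl 0 \<or> h = Inl 1 \<or> (\<exists>i<n. h = Inr i)" if "h \<in> K2n_V n" for h
    using that by (auto simp: K2n_V_def)
  have branch: "\<beta> h \<subseteq> V \<and> connected_in E (\<beta> h)" if "h \<in> K2n_V n" for h
    using K2n_cases[OF that] x C B
    by (elim disjE exE conjE) (simp_all add: \<beta>_def connected_in_singleton)
  have disjoint: "\<beta> h \<inter> \<beta> h' = {}" if "h \<in> K2n_V n" "h' \<in> K2n_V n" "h \<noteq> h'" for h h'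
    using K2n_cases[OF that(1)] K2n_cases[OF that(2)] that(3) C B
    by (elim disjE exE conjE) (simp_all add: \<beta>_def Int_commute)
  have adjacent: "\<exists>u\<in>\<beta> h. \<exists>v\<in>\<beta> h'. E u v"
    if "h \<in> K2n_V n" "h' \<in> K2n_V n" "K2n_E h h'" for h h'
    using K2n_cases[OF that(1)] K2n_cases[OF that(2)] that(3) x_B C_B sympD[OF sym]
    by (auto simp: \<beta>_def K2n_E_def) blast+
  have "minor_model V E (K2n_V n) K2n_E \<beta>"
    unfolding minor_model_def using branch disjoint adjacent by blast
  then show ?thesis by (auto simp: has_minor_def)
qed

lemma exists_in_set_if_filter_length:
  "0 < q \<Longrightarrow> q \<le> length (filter p xs) \<Longrightarrow> \<exists>v\<in>set xs. p v"
  by (metis filter_empty_conv le_zero_eq length_0_conv not_gr0)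

lemma has_K2n_minor_subpaths:
  assumes sym: "symp E" and path: "induced_path V E P" and x: "x \<in> V" "x \<notin> set P"
    and C: "C \<subseteq> V" "connected_in E C" "x \<notin> C" "C \<inter> set P = {}"
    and Ts: "\<And>i. i < n \<Longrightarrow> subpath (Ts ! i) P"
      "\<And>i j. i < n \<Longrightarrow> j < n \<Longrightarrow> i \<noteq> j \<Longrightarrow> set (Ts ! i) \<inter> set (Ts ! j) = {}"
    and x_Ts: "\<And>i. i < n \<Longrightarrow> \<exists>v\<in>set (Ts ! i). E x v"
    and C_Ts: "\<And>i. i < n \<Longrightarrow> \<exists>u\<in>C. \<exists>v\<in>set (Ts ! i). E u v"
  shows "has_minor V E (K2n_V n) K2n_E"
proof (rule has_K2n_minorI[OF sym x(1) C(1-3), of n "\<lambda>i. set (Ts ! i)"])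
  have in_P: "set (Ts ! i) \<subseteq> set P" if "i < n" for i
    using Ts(1)[OF that] by (auto simp: subpath_def)
  show "set (Ts ! i) \<subseteq> V" if "i < n" for i
    using in_P[OF that] path by (auto simp: induced_path_def)
  show "connected_in E (set (Ts ! i))" if "i < n" for i
    using connected_in_induced_path[OF induced_path_subpath[OF path Ts(1)[OF that]]] .
  show "x \<notin> set (Ts ! i)" "C \<inter> set (Ts ! i) = {}" if "i < n" for i
    using in_P[OF that] x(2) C(4) by auto
qed (use Ts(2) x_Ts C_Ts in auto)

lemma minor_or_subpath_avoiding:
  assumes sym: "symp E" and path: "induced_path V E P" and x: "x \<in> V" "x \<notin> set P"
    and n: "0 < n" and m: "0 < m" and "finite \<C>"
    and \<C>: "\<forall>C\<in>\<C>. C \<subseteq> V \<and> connected_in E C \<and> x \<notin> C \<and> C \<inter> set P = {}"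
    and S: "subpath S P" and count: "m * n ^ card \<C> \<le> length (filter (E x) S)"
  shows "has_minor V E (K2n_V n) K2n_E \<or>
    (\<exists>Q. subpath Q S \<and> length (filter (E x) Q) = m \<and> (\<forall>u\<in>\<Union>\<C>. \<forall>v\<in>set Q. \<not> E u v))"
  using \<open>finite \<C>\<close> \<C> S count
proof (induction \<C> arbitrary: S rule: finite_induct)
  case empty
  then obtain Q R where "S = Q @ R" "length (filter (E x) Q) = m"
    using split_filter_length[of m "E x" S] by auto
  moreover from this have "Q \<noteq> []" using m by auto
  ultimately have "subpath Q S" unfolding subpath_def by (metis append_Nil)
  then show ?case using \<open>length (filter (E x) Q) = m\<close> by auto
next
  case (insert C \<C>)
  define q where "q = m * n ^ card \<C>"
  have "0 < q" using m n by (simp add: q_def)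
  have "distinct S" using induced_path_subpath[OF path insert.prems(2)] by (simp add: induced_path_def)
  moreover have "n * q \<le> length (filter (E x) S)"
    using insert.prems(3) insert.hyps by (simp add: q_def ac_simps)
  ultimately obtain Ts where Ts: "length Ts = n"
      "\<And>T. T \<in> set Ts \<Longrightarrow> subpath T S \<and> q \<le> length (filter (E x) T)"
      "\<And>i j. i < n \<Longrightarrow> j < n \<Longrightarrow> i \<noteq> j \<Longrightarrow> set (Ts ! i) \<inter> set (Ts ! j) = {}"
    using subpaths_of_filter_length[of S n q "E x"] n \<open>0 < q\<close> by blast
  have piece: "subpath (Ts ! i) S" "q \<le> length (filter (E x) (Ts ! i))" if "i < n" for i
    using Ts(1,2) that by auto
  have piece_path: "subpath (Ts ! i) P" if "i < n" for i
    using subpath_trans[OF piece(1)[OF that] insert.prems(2)] .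
  have C: "C \<subseteq> V" "connected_in E C" "x \<notin> C" "C \<inter> set P = {}" using insert.prems(1) by auto
  show ?case
  proof (cases "\<forall>i<n. \<exists>u\<in>C. \<exists>v\<in>set (Ts ! i). E u v")
    case True
    have "has_minor V E (K2n_V n) K2n_E"
      using has_K2n_minor_subpaths[OF sym path x C, of n Ts] Ts(3) True piece_path
        exists_in_set_if_filter_length[OF \<open>0 < q\<close> piece(2)] by blast
    then show ?thesis ..
  next
    case False
    then obtain i where "i < n" and C_avoids: "\<forall>u\<in>C. \<forall>v\<in>set (Ts ! i). \<not> E u v" by blast
    from insert.IH[of "Ts ! i"] insert.prems(1) piece_path[OF \<open>i < n\<close>] piece(2)[OF \<open>i < n\<close>]
    consider "has_minor V E (K2n_V n) K2n_E"
      | Q where "subpath Q (Ts ! i)" "length (filter (E x) Q) = m" "\<forall>u\<in>\<Union>\<C>. \<forall>v\<in>set Q. \<not> E u v"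
      by (auto simp: q_def)
    then show ?thesis
    proof cases
      case (2 Q)
      then have "set Q \<subseteq> set (Ts ! i)" by (auto simp: subpath_def)
      with 2(3) C_avoids have "\<forall>u\<in>\<Union>(insert C \<C>). \<forall>v\<in>set Q. \<not> E u v" by auto
      with 2(2) subpath_trans[OF 2(1) piece(1)[OF \<open>i < n\<close>]] show ?thesis by blast
    qed simp
  qed
qed

theorem mainTheorem10:
  fixes V :: "'a set" and E :: "'a \<Rightarrow> 'a \<Rightarrow> bool" and P :: "'a list" and x :: 'a
    and n m t :: nat
  assumes "simple_graph V E"
    and "0 < n" and "0 < m"
    and "induced_path V E P"
    and "x \<in> V" and "x \<notin> set P"
    and "card (components E (V - set P - {x})) = t"
    and "card {v \<in> set P. E x v} \<ge> (m + 2) * n ^ t"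
  shows "has_minor V E (K2n_V n) K2n_E \<or>
    (\<exists>Q. subpath Q P \<and> card {v \<in> set Q. E x v} = m \<and>
         (\<forall>u \<in> V - set P - {x}. \<forall>v \<in> set Q. \<not> E u v))"
proof -
  define W where "W = V - set P - {x}"
  have sym: "symp E" and "finite W"
    using assms(1) by (auto simp: simple_graph_def symp_def W_def)
  have card_eq: "card {v \<in> set Q. E x v} = length (filter (E x) Q)" if "subpath Q P" for Q
    using induced_path_subpath[OF assms(4) that]
    by (simp add: induced_path_def distinct_length_filter Collect_conj_eq Int_commute)
  have "subpath P P" using assms(4) by (simp add: subpath_refl induced_path_def)
  moreover have "m * n ^ card (components E W) \<le> length (filter (E x) P)"
    using assms(7,8) card_eq[OF \<open>subpath P P\<close>]
    by (simp add: W_def)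
  moreover have "\<forall>C\<in>components E W. C \<subseteq> V \<and> connected_in E C \<and> x \<notin> C \<and> C \<inter> set P = {}"
    by (auto simp: components_def W_def)
  ultimately have "has_minor V E (K2n_V n) K2n_E \<or> (\<exists>Q. subpath Q P \<and>
      length (filter (E x) Q) = m \<and> (\<forall>u\<in>\<Union>(components E W). \<forall>v\<in>set Q. \<not> E u v))"
    using minor_or_subpath_avoiding[OF sym assms(4-6,2,3) finite_components[OF \<open>finite W\<close>]]
    by blast
  then show ?thesis using card_eq Union_components[OF sym] unfolding W_def by auto
qed

end
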